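(* Let $q$ be a prime power and let $i,d,k,n,\bar{s}$ be positive integers with $\lfloor (d+1)/2\rfloor\leq i\leq d<k$, $k-i\geq 2$, $n-k-\bar{s}(k+d-2i)\geq d-i$, and $1\leq \bar{s}\leq q(q^{k-1}-1)/(q^{k-i}-1)$. Then: (i) $M_q(i;d,k,n)$ is an $\bar{s}^{\bar{e}_2}$-disjunct matrix, where $$\bar{e}_2=q^{(d-i)(k+\bar{s}(k+d-2i)-i)}\left[n-k-\bar{s}(k+d-2i)\atop d-i\right]_q\left(q^{k-i}\left[k-1\atop i-1\right]_q-(\bar{s}-1)q^{k-i-1}\left[k-2\atop i-1\right]_q\right)-1;$$ (ii) if moreover $i<d$, then, with $q,i,d,k,\bar{s}$ fixed and $n\to+\infty$, $\lim_{n\to+\infty}\frac{\bar{e}_2+1}{\bar{e}_1+1}=+\infty$, where $\bar{e}_1=q^{k-d}\left[k-1\atop d-1\right]_q-(\bar{s}-1)q^{k-d-1}\left[k-2\atop d-1\right]_q-1$.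
   Context: $\mathbb{F}_q$ is the finite field with $q$ elements. For integers $m_1,m_2$ the Gaussian coefficient is $\left[m_2\atop m_1\right]_q=\prod_{t=m_2-m_1+1}^{m_2}(q^t-1)\big/\prod_{t=1}^{m_1}(q^t-1)$, with $\left[m_2\atop 0\right]_q=1$ and $\left[m_2\atop m_1\right]_q=0$ whenever $m_1<0$ or $m_2<m_1$. For $1\leq d<k<n$ and $\max\{0,d+k-n\}\leq i\leq d$, $M_q(i;d,k,n)$ is the binary matrix whose rows are indexed by the $d$-dimensional subspaces of $\mathbb{F}_q^n$ and whose columns are indexed by the $k$-dimensional subspaces of $\mathbb{F}_q^n$, with entry $M_q(A,B)=1$ iff $\dim(A\cap B)=i$. Viewing each column as the set of row indices where it has a 1-entry, a binary matrix is $s^e$-disjunct if for every column $C$ and every $s$ other columns $C_1,\dots,C_s$, the column $C$ has at least $e+1$ 1-entries not in $C_1\cup\cdots\cup C_s$. *)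

theory Defs
  imports "HOL-Analysis.Analysis"
begin

definition gauss_coef :: "nat \<Rightarrow> int \<Rightarrow> int \<Rightarrow> real" where
  "gauss_coef q m2 m1 =
     (if m1 < 0 \<or> m2 < m1 then 0
      else if m1 = 0 then 1
      else (\<Prod>t\<in>{m2 - m1 + 1..m2}. real q ^ nat t - 1) / (\<Prod>t\<in>{1..m1}. real q ^ nat t - 1))"

definition subspaces_of_dim :: "nat \<Rightarrow> ('a::field ^ 'n) set set" where
  "subspaces_of_dim m = {A. vec.subspace A \<and> vec.dim A = m}"

text \<open>Entry of M_q(i;d,k,n) at row A (d-subspace), column B (k-subspace).\<close>
definition Mentry :: "nat \<Rightarrow> ('a::field ^ 'n) set \<Rightarrow> ('a ^ 'n) set \<Rightarrow> bool" where
  "Mentry i A B \<longleftrightarrow> vec.dim (A \<inter> B) = i"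

text \<open>M_q(i;d,k,n) is s^e-disjunct: for every column C and every s other columns
  C_1..C_s, column C has at least e+1 one-entries not in C_1 \<union> ... \<union> C_s.\<close>
definition M_disjunct :: "'a::field itself \<Rightarrow> 'n::finite itself \<Rightarrow> nat \<Rightarrow> nat \<Rightarrow> nat \<Rightarrow> nat \<Rightarrow> real \<Rightarrow> bool" where
  "M_disjunct _ _ i d k s e \<longleftrightarrow>
     (\<forall>C \<in> (subspaces_of_dim k :: ('a ^ 'n) set set).
       \<forall>Cs. Cs \<subseteq> subspaces_of_dim k \<and> C \<notin> Cs \<and> card Cs = s \<longrightarrow>
         real (card {A \<in> (subspaces_of_dim d :: ('a ^ 'n) set set).
                       Mentry i A C \<and> (\<forall>B\<in>Cs. \<not> Mentry i A B)}) \<ge> e + 1)"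

definition e2bar :: "nat \<Rightarrow> nat \<Rightarrow> nat \<Rightarrow> nat \<Rightarrow> nat \<Rightarrow> nat \<Rightarrow> real" where
  "e2bar q i d k n s =
     real q ^ ((d - i) * (k + s * (k + d - 2 * i) - i))
     * gauss_coef q (int n - int k - int s * (int k + int d - 2 * int i)) (int d - int i)
     * (real q ^ (k - i) * gauss_coef q (int k - 1) (int i - 1)
        - (real s - 1) * real q ^ (k - i - 1) * gauss_coef q (int k - 2) (int i - 1))
     - 1"

definition e1bar :: "nat \<Rightarrow> nat \<Rightarrow> nat \<Rightarrow> nat \<Rightarrow> real" where
  "e1bar q d k s =
     real q ^ (k - d) * gauss_coef q (int k - 1) (int d - 1)
     - (real s - 1) * real q ^ (k - d - 1) * gauss_coef q (int k - 2) (int d - 1) - 1"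

end

theory Submission
  imports Defs
begin

text \<open>
  Fix a column \<open>C\<close> and further columns \<open>B\<^sub>1, \<dots>, B\<^sub>s\<close>. Choose subspaces \<open>Z\<^sub>j\<close> with
  \<open>C \<subseteq> Z\<^sub>j \<subseteq> C + B\<^sub>j\<close> of dimension \<open>min (dim (C + B\<^sub>j)) (2k + d - 2i)\<close>, and let
  \<open>U = C + Z\<^sub>1 + \<dots> + Z\<^sub>s\<close>, so that \<open>dim U \<le> k + s(k + d - 2i)\<close>. If \<open>I\<close> is an \<open>i\<close>-subspace
  of \<open>C\<close> contained in no \<open>B\<^sub>j\<close> and \<open>A\<close> is a \<open>d\<close>-subspace with \<open>A \<inter> U = I\<close>, then
  \<open>A \<inter> C = I\<close>, while a dimension count inside \<open>C + B\<^sub>j\<close> (via the modular law) excludes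
  \<open>dim (A \<inter> B\<^sub>j) = i\<close>. Choosing a hyperplane of \<open>C\<close> through each \<open>C \<inter> B\<^sub>j\<close>, there are at
  least \<open>q\<^bsup>k-i\<^esup>[k-1, i-1] - (s-1) q\<^bsup>k-i-1\<^esup>[k-2, i-1]\<close> such \<open>I\<close>, and for each of them
  \<open>q\<^bsup>(d-i)(dim U - i)\<^esup>[n - dim U, d - i]\<close> such \<open>A\<close>, a quantity that decreases with \<open>dim U\<close>.

  For the limit, the bound on \<open>s\<close> makes the hyperplane-avoidance counts in \<open>e2bar\<close> and
  \<open>e1bar\<close> positive, and \<open>[n - u, d - i]\<close> is unbounded in \<open>n\<close> when \<open>i < d\<close>.
\<close>

section \<open>Subspaces of finite-dimensional coordinate spaces\<close>

lemma card_span_independent: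
  fixes B :: "('a::{finite,field} ^ 'n) set"
  assumes "vec.independent B"
  shows "card (vec.span B) = CARD('a) ^ card B"
proof -
  have "finite B" using assms vec.finiteI_independent by blast
  then show ?thesis using assms
  proof (induction B rule: finite_induct)
    case empty
    then show ?case by simp
  next
    case (insert v B)
    have indB: "vec.independent B" and vB: "v \<notin> vec.span B"
      using insert.prems insert.hyps(2) vec.independent_insert by metis+
    let ?f = "\<lambda>(c, w). c *s v + w"
    have span_eq: "vec.span (insert v B) = ?f ` (UNIV \<times> vec.span B)"
    proof (rule set_eqI, rule iffI)
      fix x assume "x \<in> vec.span (insert v B)"
      then obtain c where "x - c *s v \<in> vec.span B" unfolding vec.span_insert by blast
      then show "x \<in> ?f ` (UNIV \<times> vec.span B)"
        by (intro image_eqI[of _ _ "(c, x - c *s v)"]) auto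
    next
      fix x assume "x \<in> ?f ` (UNIV \<times> vec.span B)"
      then obtain c w where "x = c *s v + w" "w \<in> vec.span B" by auto
      then show "x \<in> vec.span (insert v B)"
        unfolding vec.span_insert by (intro CollectI exI[of _ c]) auto
    qed
    have "inj_on ?f (UNIV \<times> vec.span B)"
    proof (rule inj_onI, clarify)
      fix c w c' w'
      assume w: "w \<in> vec.span B" "w' \<in> vec.span B" and eq: "c *s v + w = c' *s v + w'"
      have "(c - c') *s v = w' - w" using eq by (simp add: algebra_simps vector_sub_rdistrib)
      moreover have "w' - w \<in> vec.span B" using w vec.span_diff by blast
      ultimately have "c = c'"
        using vB vec.span_scale[of "(c - c') *s v" B "inverse (c - c')"]
        by (metis eq_iff_diff_eq_0 left_inverse vector_smult_lid vector_smult_assoc)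
      then show "c = c' \<and> w = w'" using eq by simp
    qed
    then have "card (vec.span (insert v B)) = CARD('a) * card (vec.span B)"
      unfolding span_eq by (simp add: card_image card_cartesian_product)
    then show ?case using insert indB by simp
  qed
qed

lemma card_subspace:
  fixes S :: "('a::{finite,field} ^ 'n) set"
  assumes "vec.subspace S"
  shows "card S = CARD('a) ^ vec.dim S"
proof -
  obtain B where B: "B \<subseteq> S" "vec.independent B" "S \<subseteq> vec.span B" "card B = vec.dim S"
    using vec.basis_exists by blast
  then have "vec.span B = S" using assms vec.span_subspace by blast
  then show ?thesis using card_span_independent[OF B(2)] B(4) by simp
qed

lemma two_le_card_field: "2 \<le> CARD('a::{finite,field})"
proof -
  have "card {0::'a, 1} \<le> CARD('a)" by (rule card_mono) auto
  then show ?thesis by simp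
qed

lemma subspace_between_exists:
  fixes X Y :: "('a::field ^ 'n::finite) set"
  assumes "vec.subspace Y" "X \<subseteq> Y" "vec.dim X \<le> m" "m \<le> vec.dim Y"
  obtains Z where "vec.subspace Z" "X \<subseteq> Z" "Z \<subseteq> Y" "vec.dim Z = m"
proof -
  obtain B where B: "B \<subseteq> X" "vec.independent B" "X \<subseteq> vec.span B" "card B = vec.dim X"
    using vec.basis_exists by blast
  obtain BY where BY: "B \<subseteq> BY" "BY \<subseteq> Y" "vec.independent BY" "Y \<subseteq> vec.span BY"
    using vec.maximal_independent_subset_extend[of B Y] B assms by blast
  have finBY: "finite BY" and finB: "finite B"
    using BY B vec.finiteI_independent by blast+
  have "card BY = vec.dim Y" using vec.basis_card_eq_dim BY by blast
  then have "m - card B \<le> card (BY - B)"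
    using B(4) assms finBY BY(1) by (simp add: card_Diff_subset finite_subset)
  then obtain E where E: "E \<subseteq> BY - B" "card E = m - card B"
    by (meson obtain_subset_with_card_n)
  have "finite E" using E finBY by (meson finite_Diff finite_subset)
  then have card_BE: "card (B \<union> E) = m" using E finB assms B(4) by (subst card_Un_disjoint) auto
  have ind: "vec.independent (B \<union> E)" using vec.independent_mono[OF BY(3)] E BY(1) by blast
  show ?thesis
  proof
    show "vec.subspace (vec.span (B \<union> E))" by simp
    show "X \<subseteq> vec.span (B \<union> E)" using B(3) vec.span_mono by blast
    show "vec.span (B \<union> E) \<subseteq> Y" using BY E assms(1) B(1) assms(2)
      by (metis Diff_subset Un_subset_iff order_trans vec.span_minimal)
    show "vec.dim (vec.span (B \<union> E)) = m"
      using vec.dim_span_eq_card_independent[OF ind] card_BE by simp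
  qed
qed

lemma dim_Int_less:
  fixes S B :: "('a::field ^ 'n::finite) set"
  assumes "vec.subspace S" "vec.subspace B" "\<not> S \<subseteq> B"
  shows "vec.dim (S \<inter> B) < vec.dim S"
proof -
  have "vec.subspace (S \<inter> B)" using assms vec.subspace_inter by blast
  then have "vec.dim (S \<inter> B) \<noteq> vec.dim S"
    using vec.subspace_dim_equal[OF _ assms(1)] assms(3) by (metis Int_lower1 Int_lower2 order_refl)
  moreover have "vec.dim (S \<inter> B) \<le> vec.dim S" by (simp add: vec.dim_subset)
  ultimately show ?thesis by simp
qed

lemma hyperplane_through_Int_exists:
  fixes B C :: "('a::field ^ 'n::finite) set"
  assumes "vec.subspace B" "vec.subspace C" "\<not> C \<subseteq> B"
  obtains H where "vec.subspace H" "C \<inter> B \<subseteq> H" "H \<subseteq> C" "vec.dim H = vec.dim C - 1"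
proof -
  have "vec.dim (C \<inter> B) \<le> vec.dim C - 1" using dim_Int_less[OF assms(2,1,3)] by simp
  then show ?thesis using subspace_between_exists[OF assms(2), of "C \<inter> B" "vec.dim C - 1"] that
    by auto
qed

lemma dim_span_Un_add_dim_Int:
  fixes S T :: "('a::field ^ 'n::finite) set"
  assumes "vec.subspace S" "vec.subspace T"
  shows "vec.dim (vec.span (S \<union> T)) + vec.dim (S \<inter> T) = vec.dim S + vec.dim T"
proof -
  have "vec.span (S \<union> T) = {x + y |x y. x \<in> S \<and> y \<in> T}"
    unfolding vec.span_Un using assms by (simp add: vec.span_eq_iff[THEN iffD2])
  then show ?thesis using vec.dim_sums_Int[OF assms] by simp
qed

lemma span_Un_Int_eq:
  fixes T C Z :: "('a::field ^ 'n::finite) set"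
  assumes "vec.subspace T" "vec.subspace C" "vec.subspace Z" "C \<subseteq> Z" "T \<inter> Z \<subseteq> C"
  shows "vec.span (T \<union> C) \<inter> Z = C"
proof
  show "C \<subseteq> vec.span (T \<union> C) \<inter> Z" using assms(4) vec.span_superset by blast
  show "vec.span (T \<union> C) \<inter> Z \<subseteq> C"
  proof
    fix x assume x: "x \<in> vec.span (T \<union> C) \<inter> Z"
    then obtain y c where yc: "x = y + c" "y \<in> T" "c \<in> C"
      unfolding vec.span_Un using vec.span_eq_iff[THEN iffD2, OF assms(1)]
        vec.span_eq_iff[THEN iffD2, OF assms(2)] by auto
    then have "y \<in> Z" using x assms(3,4) vec.subspace_diff[of Z x c] by auto
    then have "y \<in> C" using yc(2) assms(5) by blast
    then show "x \<in> C" using yc assms(2) vec.subspace_add by blast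
  qed
qed

lemma dim_span_UN_le:
  fixes C :: "('a::field ^ 'n::finite) set" and Z :: "'b \<Rightarrow> ('a ^ 'n) set"
  assumes "finite F" "vec.subspace C"
    and "\<And>B. B \<in> F \<Longrightarrow> vec.subspace (Z B) \<and> C \<subseteq> Z B \<and> vec.dim (Z B) \<le> vec.dim C + m"
  shows "vec.dim (vec.span (C \<union> \<Union>(Z ` F))) \<le> vec.dim C + card F * m"
  using assms(1,3)
proof (induction F rule: finite_induct)
  case empty
  then show ?case using assms(2) by simp
next
  case (insert B F)
  let ?X = "vec.span (C \<union> \<Union>(Z ` F))"
  have ZB: "vec.subspace (Z B)" "C \<subseteq> Z B" "vec.dim (Z B) \<le> vec.dim C + m"
    using insert.prems by auto
  have "vec.span (C \<union> \<Union>(Z ` insert B F)) = vec.span (?X \<union> Z B)"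
    unfolding vec.span_eq using vec.span_superset[of "C \<union> \<Union>(Z ` F)"]
      vec.span_mono[of "C \<union> \<Union>(Z ` F)" "C \<union> \<Union>(Z ` insert B F)"]
    by (auto intro: vec.span_base)
  moreover have "vec.dim (vec.span (?X \<union> Z B)) + vec.dim (?X \<inter> Z B) = vec.dim ?X + vec.dim (Z B)"
    by (rule dim_span_Un_add_dim_Int[OF vec.subspace_span ZB(1)])
  moreover have "vec.dim C \<le> vec.dim (?X \<inter> Z B)"
    using ZB(2) vec.span_superset by (intro vec.dim_subset) blast
  moreover have "vec.dim ?X \<le> vec.dim C + card F * m" using insert by auto
  ultimately show ?case using ZB(3) insert.hyps by simp
qed

section \<open>Gaussian coefficients\<close>

definition qfalling :: "nat \<Rightarrow> nat \<Rightarrow> nat \<Rightarrow> real" where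
  "qfalling q m t = (\<Prod>j<t. real q ^ (m - j) - 1)"

text \<open>For a prime power \<open>q\<close>, \<open>qframes q a b t\<close> counts the lists of length \<open>t\<close> in an
  \<open>a\<close>-dimensional space over \<open>\<bbbF>\<^sub>q\<close> that are linearly independent modulo a fixed
  \<open>b\<close>-dimensional subspace.\<close>

definition qframes :: "nat \<Rightarrow> nat \<Rightarrow> nat \<Rightarrow> nat \<Rightarrow> real" where
  "qframes q a b t = (\<Prod>j<t. real q ^ a - real q ^ (b + j))"

lemma power_minus_one_pos:
  assumes "2 \<le> q" "1 \<le> m"
  shows "0 < real q ^ m - 1"
proof -
  have "real q ^ 1 \<le> real q ^ m" using assms by (intro power_increasing) auto
  then show ?thesis using assms by simp
qed

lemma qfalling_pos: "2 \<le> q \<Longrightarrow> t \<le> m \<Longrightarrow> 0 < qfalling q m t"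
  unfolding qfalling_def by (intro prod_pos) (simp add: power_minus_one_pos)

lemma qfalling_Suc_Suc: "qfalling q (Suc m) (Suc t) = (real q ^ Suc m - 1) * qfalling q m t"
  unfolding qfalling_def prod.lessThan_Suc_shift by simp

lemma qfalling_Suc: "qfalling q m (Suc t) = qfalling q m t * (real q ^ (m - t) - 1)"
  unfolding qfalling_def by simp

lemma gauss_coef_eq_qfalling:
  assumes "t \<le> m"
  shows "gauss_coef q (int m) (int t) = qfalling q m t / qfalling q t t"
proof (cases "t = 0")
  case True
  then show ?thesis by (simp add: gauss_coef_def qfalling_def)
next
  case False
  have num: "(\<Prod>x\<in>{int m - int t + 1..int m}. real q ^ nat x - 1) = qfalling q m t"
    unfolding qfalling_def
    by (rule prod.reindex_bij_witness[symmetric, of _ "\<lambda>b. nat (int m - b)" "\<lambda>a. int m - int a"])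
       (use assms in \<open>auto simp: nat_diff_distrib'\<close>)
  have den: "(\<Prod>x\<in>{1..int t}. real q ^ nat x - 1) = qfalling q t t"
    unfolding qfalling_def
    by (rule prod.reindex_bij_witness[symmetric, of _ "\<lambda>b. nat (int t - b)" "\<lambda>a. int t - int a"])
       (auto simp: nat_diff_distrib')
  show ?thesis using False assms unfolding gauss_coef_def num den by simp
qed

lemma gauss_coef_pos: "2 \<le> q \<Longrightarrow> l \<le> m \<Longrightarrow> 0 < gauss_coef q (int m) (int l)"
  by (simp add: gauss_coef_eq_qfalling qfalling_pos)

lemma gauss_coef_pascal:
  assumes q: "2 \<le> q" and "t < m"
  shows "gauss_coef q (int (Suc m)) (int (Suc t)) - gauss_coef q (int m) (int (Suc t))
       = real q ^ (m - t) * gauss_coef q (int m) (int t)"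
proof -
  have pos: "0 < real q ^ Suc t - 1" by (rule power_minus_one_pos[OF q]) simp
  have pw: "real q ^ Suc m = real q ^ (m - t) * real q ^ Suc t"
    using assms by (simp flip: power_add)
  have g1: "gauss_coef q (int (Suc m)) (int (Suc t)) = qfalling q (Suc m) (Suc t) / qfalling q (Suc t) (Suc t)"
    using assms by (intro gauss_coef_eq_qfalling) simp
  have g2: "gauss_coef q (int m) (int (Suc t)) = qfalling q m (Suc t) / qfalling q (Suc t) (Suc t)"
    using assms by (intro gauss_coef_eq_qfalling) simp
  have g3: "gauss_coef q (int m) (int t) = qfalling q m t / qfalling q t t"
    using assms by (intro gauss_coef_eq_qfalling) simp
  have num: "(real q ^ Suc m - 1) * qfalling q m t - qfalling q m t * (real q ^ (m - t) - 1)
      = (real q ^ Suc t - 1) * (real q ^ (m - t) * qfalling q m t)"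
    unfolding pw by algebra
  have "gauss_coef q (int (Suc m)) (int (Suc t)) - gauss_coef q (int m) (int (Suc t))
      = ((real q ^ Suc m - 1) * qfalling q m t - qfalling q m t * (real q ^ (m - t) - 1))
        / ((real q ^ Suc t - 1) * qfalling q t t)"
    unfolding g1 g2 qfalling_Suc_Suc[of q m t] qfalling_Suc_Suc[of q t t] qfalling_Suc[of q m t]
    by (simp add: diff_divide_distrib)
  also have "\<dots> = (real q ^ Suc t - 1) * (real q ^ (m - t) * qfalling q m t) / ((real q ^ Suc t - 1) * qfalling q t t)"
    unfolding num ..
  also have "\<dots> = real q ^ (m - t) * (qfalling q m t / qfalling q t t)"
    using pos by simp
  finally show ?thesis unfolding g3 .
qed

lemma gauss_coef_Suc_ratio:
  assumes q: "2 \<le> q" and "l \<le> m"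
  shows "gauss_coef q (int (Suc m)) (int l) * (real q ^ (Suc m - l) - 1)
       = gauss_coef q (int m) (int l) * (real q ^ Suc m - 1)"
proof -
  have g1: "gauss_coef q (int (Suc m)) (int l) = qfalling q (Suc m) l / qfalling q l l"
    using assms by (intro gauss_coef_eq_qfalling) simp
  have g2: "gauss_coef q (int m) (int l) = qfalling q m l / qfalling q l l"
    using assms by (intro gauss_coef_eq_qfalling) simp
  have "qfalling q (Suc m) l * (real q ^ (Suc m - l) - 1) = (real q ^ Suc m - 1) * qfalling q m l"
    by (metis qfalling_Suc qfalling_Suc_Suc)
  then show ?thesis unfolding g1 g2 using qfalling_pos[OF q, of l l] by (simp add: field_simps)
qed

lemma gauss_coef_ge:
  assumes q: "2 \<le> q" and "1 \<le> t" "t \<le> m"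
  shows "(real q ^ m - 1) / (real q ^ t - 1) \<le> gauss_coef q (int m) (int t)"
proof -
  obtain t' m' where tm: "t = Suc t'" "m = Suc m'" using assms by (cases t; cases m) auto
  have le: "t' \<le> m'" using assms tm by simp
  have "qfalling q t' t' \<le> qfalling q m' t'"
    unfolding qfalling_def
  proof (rule prod_mono, clarify)
    fix j assume "j < t'"
    have "real q ^ (t' - j) \<le> real q ^ (m' - j)" using q le by (intro power_increasing) auto
    moreover have "1 \<le> real q ^ (t' - j)" using q by simp
    ultimately show "0 \<le> real q ^ (t' - j) - 1 \<and> real q ^ (t' - j) - 1 \<le> real q ^ (m' - j) - 1"
      by simp
  qed
  then have "1 \<le> qfalling q m' t' / qfalling q t' t'" using qfalling_pos[OF q, of t' t'] by simp
  moreover have "gauss_coef q (int m) (int t) = qfalling q m t / qfalling q t t"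
    using assms(3) by (rule gauss_coef_eq_qfalling)
  then have "gauss_coef q (int m) (int t)
      = (real q ^ m - 1) / (real q ^ t - 1) * (qfalling q m' t' / qfalling q t' t')"
    unfolding tm qfalling_Suc_Suc by simp
  moreover have "0 \<le> (real q ^ m - 1) / (real q ^ t - 1)"
    using power_minus_one_pos[OF q assms(2)] q by simp
  ultimately show ?thesis by (metis mult.right_neutral mult_left_mono)
qed

lemma real_less_power: "2 \<le> q \<Longrightarrow> real n < real q ^ n"
proof -
  assume "2 \<le> q"
  have "real n < 2 ^ n" using less_exp[of n] by (metis of_nat_less_iff of_nat_numeral of_nat_power)
  also have "\<dots> \<le> real q ^ n" using \<open>2 \<le> q\<close> by (intro power_mono) auto
  finally show ?thesis .
qed

lemma gauss_coef_tendsto_at_top: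
  assumes q: "2 \<le> q" and t: "1 \<le> t"
  shows "filterlim (\<lambda>m. gauss_coef q (int (m - u)) (int t)) at_top at_top"
proof (rule filterlim_at_top_mono)
  have D: "0 < inverse (real q ^ t - 1)" using power_minus_one_pos[OF q t] by simp
  have "filterlim (\<lambda>m. (- real u - 1) + real m) at_top at_top"
    by (rule filterlim_tendsto_add_at_top[OF tendsto_const filterlim_real_sequentially])
  then show "filterlim (\<lambda>m. inverse (real q ^ t - 1) * ((- real u - 1) + real m)) at_top at_top"
    by (rule filterlim_tendsto_pos_mult_at_top[OF tendsto_const D])
  have "inverse (real q ^ t - 1) * ((- real u - 1) + real m) \<le> gauss_coef q (int (m - u)) (int t)"
    if "u + t \<le> m" for m
  proof -
    have "(- real u - 1) + real m \<le> real q ^ (m - u) - 1"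
      using real_less_power[OF q, of "m - u"] that by simp
    then have "inverse (real q ^ t - 1) * ((- real u - 1) + real m) \<le> inverse (real q ^ t - 1) * (real q ^ (m - u) - 1)"
      using D by (intro mult_left_mono) auto
    also have "\<dots> = (real q ^ (m - u) - 1) / (real q ^ t - 1)" by (simp add: divide_inverse_commute)
    also have "\<dots> \<le> gauss_coef q (int (m - u)) (int t)" using gauss_coef_ge[OF q t, of "m - u"] that by simp
    finally show ?thesis .
  qed
  then show "\<forall>\<^sub>F m in at_top. inverse (real q ^ t - 1) * ((- real u - 1) + real m) \<le> gauss_coef q (int (m - u)) (int t)"
    unfolding eventually_at_top_linorder by blast
qed

lemma qframes_pos: "2 \<le> q \<Longrightarrow> b + t \<le> a \<Longrightarrow> 0 < qframes q a b t"
  unfolding qframes_def by (intro prod_pos) (simp add: power_strict_increasing)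

lemma qframes_antimono:
  assumes "2 \<le> q" "b \<le> b'" "b' + t \<le> a"
  shows "qframes q a b' t \<le> qframes q a b t"
  unfolding qframes_def
proof (rule prod_mono, clarify)
  fix j assume "j < t"
  then have "real q ^ (b' + j) \<le> real q ^ a" "real q ^ (b + j) \<le> real q ^ (b' + j)"
    using assms by (intro power_increasing; simp)+
  then show "0 \<le> real q ^ a - real q ^ (b' + j) \<and> real q ^ a - real q ^ (b' + j) \<le> real q ^ a - real q ^ (b + j)"
    by simp
qed

lemma qframes_shift:
  assumes "b \<le> a"
  shows "qframes q a b t = real q ^ (b * t) * qframes q (a - b) 0 t"
proof -
  have "real q ^ a - real q ^ (b + j) = real q ^ b * (real q ^ (a - b) - real q ^ j)" for j
    using assms by (simp add: algebra_simps flip: power_add)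
  then have "qframes q a b t = (\<Prod>j<t. real q ^ b) * qframes q (a - b) 0 t"
    unfolding qframes_def prod.distrib[symmetric] by simp
  then show ?thesis by (simp add: power_mult)
qed

lemma qframes_0_eq:
  assumes "t \<le> m"
  shows "qframes q m 0 t = (\<Prod>j<t. real q ^ j) * qfalling q m t"
proof -
  have "real q ^ m - real q ^ j = real q ^ j * (real q ^ (m - j) - 1)" if "j < t" for j
    using that assms by (simp add: algebra_simps flip: power_add)
  then show ?thesis unfolding qframes_def qfalling_def prod.distrib[symmetric]
    by (intro prod.cong) auto
qed

lemma gauss_coef_eq_qframes:
  assumes "2 \<le> q" "t \<le> m"
  shows "gauss_coef q (int m) (int t) = qframes q m 0 t / qframes q t 0 t"
proof -
  have "0 < (\<Prod>j<t. real q ^ j)" using assms by (intro prod_pos) auto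
  then show ?thesis using assms by (simp add: qframes_0_eq gauss_coef_eq_qfalling)
qed

lemma qframes_ratio_eq:
  assumes q: "2 \<le> q" and "i \<le> u" "u + t \<le> n"
  shows "qframes q n u t / qframes q (i + t) i t = real q ^ (t * (u - i)) * gauss_coef q (int (n - u)) (int t)"
proof -
  obtain w where w: "u = i + w" using assms le_Suc_ex by blast
  have "real q ^ (u * t) = real q ^ (t * (u - i)) * real q ^ (i * t)"
    unfolding w by (simp add: algebra_simps flip: power_add)
  moreover have "0 < real q ^ (i * t)" using q by simp
  ultimately show ?thesis
    using assms qframes_shift[of u n q t] qframes_shift[of i "i + t" q t] gauss_coef_eq_qframes[OF q, of t "n - u"]
    by simp
qed

section \<open>Counting subspaces\<close>

definition subspaces_in :: "('a::field ^ 'n) set \<Rightarrow> nat \<Rightarrow> ('a ^ 'n) set set" where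
  "subspaces_in S m = {A. vec.subspace A \<and> vec.dim A = m \<and> A \<subseteq> S}"

definition subspaces_meeting :: "('a::field ^ 'n) set \<Rightarrow> ('a ^ 'n) set \<Rightarrow> ('a ^ 'n) set \<Rightarrow> nat
    \<Rightarrow> ('a ^ 'n) set set" where
  "subspaces_meeting V U I m = {A. vec.subspace A \<and> vec.dim A = m \<and> A \<subseteq> V \<and> A \<inter> U = I}"

fun indep_mod :: "('a::field ^ 'n) set \<Rightarrow> ('a ^ 'n) set \<Rightarrow> ('a ^ 'n) list \<Rightarrow> bool" where
  "indep_mod S U [] \<longleftrightarrow> True"
| "indep_mod S U (v # vs) \<longleftrightarrow> indep_mod S U vs \<and> v \<in> S \<and> v \<notin> vec.span (U \<union> set vs)"

lemma indep_mod_set: "indep_mod S U vs \<Longrightarrow> set vs \<subseteq> S"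
  by (induction vs) auto

lemma dim_span_indep_mod:
  fixes U :: "('a::field ^ 'n::finite) set"
  assumes "indep_mod S U vs" "vec.subspace U"
  shows "vec.dim (vec.span (U \<union> set vs)) = vec.dim U + length vs"
  using assms(1)
proof (induction vs)
  case Nil
  then show ?case using assms(2) by simp
next
  case (Cons v vs)
  then have "vec.dim (insert v (U \<union> set vs)) = vec.dim (U \<union> set vs) + 1"
    by (simp add: vec.dim_insert)
  then show ?case using Cons vec.dim_span[of "U \<union> set vs"] by simp
qed

lemma indep_mod_mono:
  fixes U :: "('a::field ^ 'n::finite) set"
  assumes "indep_mod S U vs" "set vs \<subseteq> S'" "U' \<subseteq> U"
  shows "indep_mod S' U' vs"
  using assms
proof (induction vs)
  case (Cons v vs)
  have "vec.span (U' \<union> set vs) \<subseteq> vec.span (U \<union> set vs)"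
    using Cons.prems by (intro vec.span_mono) auto
  then show ?case using Cons by auto
qed simp

lemma indep_mod_lift:
  fixes U :: "('a::field ^ 'n::finite) set"
  assumes "indep_mod A I vs" "A \<subseteq> V" "A \<inter> U = I" "vec.subspace A" "vec.subspace U"
  shows "indep_mod V U vs"
  using assms
proof (induction vs)
  case (Cons v vs)
  have vA: "v \<in> A" and v: "v \<notin> vec.span (I \<union> set vs)" and ind: "indep_mod A I vs"
    using Cons.prems by auto
  have "v \<notin> vec.span (U \<union> set vs)"
  proof
    assume "v \<in> vec.span (U \<union> set vs)"
    then obtain x y where xy: "v = x + y" "x \<in> U" "y \<in> vec.span (set vs)"
      unfolding vec.span_Un using vec.span_eq_iff[THEN iffD2, OF Cons.prems(5)] by auto
    have "y \<in> A" using xy(3) indep_mod_set[OF ind] Cons.prems(4) vec.span_minimal by blast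
    then have "x \<in> A" using xy(1) vA Cons.prems(4) vec.subspace_diff[of A v y] by auto
    then have "x \<in> vec.span (I \<union> set vs)" using xy(2) Cons.prems(3) by (auto intro: vec.span_base)
    moreover have "y \<in> vec.span (I \<union> set vs)" using xy(3) vec.span_mono[of "set vs"] by blast
    ultimately show False using xy(1) v vec.span_add by metis
  qed
  then show ?case using Cons vA by auto
qed simp

lemma finite_lists_of_length: "finite {vs :: ('a::finite) list. length vs = t \<and> P vs}"
  using finite_lists_length_eq[of "UNIV :: 'a set" t] by (rule rev_finite_subset) auto

lemma card_indep_mod:
  fixes S U :: "('a::{finite,field} ^ 'n::finite) set"
  assumes "vec.subspace S" "vec.subspace U" "U \<subseteq> S"
  shows "card {vs. length vs = t \<and> indep_mod S U vs}
       = (\<Prod>j<t. CARD('a) ^ vec.dim S - CARD('a) ^ (vec.dim U + j))"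
proof (induction t)
  case 0
  have "{vs. length vs = 0 \<and> indep_mod S U vs} = {[]}" by auto
  then show ?case by simp
next
  case (Suc t)
  let ?L = "{vs. length vs = t \<and> indep_mod S U vs}"
  let ?W = "\<lambda>vs. S - vec.span (U \<union> set vs)"
  have "{vs. length vs = Suc t \<and> indep_mod S U vs} = (\<lambda>(vs, v). v # vs) ` (SIGMA vs:?L. ?W vs)"
    by (auto simp: length_Suc_conv image_iff)
  moreover have "inj_on (\<lambda>(vs, v). v # vs) (SIGMA vs:?L. ?W vs)" by (auto simp: inj_on_def)
  moreover have "card (?W vs) = CARD('a) ^ vec.dim S - CARD('a) ^ (vec.dim U + t)" if "vs \<in> ?L" for vs
  proof -
    have "vec.span (U \<union> set vs) \<subseteq> S"
      using that indep_mod_set[of S U vs] assms by (intro vec.span_minimal) auto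
    then have "card (?W vs) = card S - card (vec.span (U \<union> set vs))"
      by (intro card_Diff_subset) auto
    then show ?thesis
      using that assms card_subspace[OF assms(1)] card_subspace[of "vec.span (U \<union> set vs)"]
        dim_span_indep_mod[of S U vs] by simp
  qed
  ultimately have "card {vs. length vs = Suc t \<and> indep_mod S U vs}
      = card ?L * (CARD('a) ^ vec.dim S - CARD('a) ^ (vec.dim U + t))"
    by (simp add: card_image card_SigmaI finite_lists_of_length)
  then show ?case using Suc by (simp add: mult.commute)
qed

lemma span_indep_mod_in_meeting:
  fixes I U V :: "('a::field ^ 'n::finite) set"
  assumes "vec.subspace I" "vec.subspace U" "vec.subspace V" "I \<subseteq> U" "U \<subseteq> V"
    and ind: "indep_mod V U vs"
  shows "vec.span (I \<union> set vs) \<in> subspaces_meeting V U I (vec.dim I + length vs)"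
proof -
  let ?A = "vec.span (I \<union> set vs)"
  have set_vs: "set vs \<subseteq> V" using indep_mod_set[OF ind] .
  have dim_A: "vec.dim ?A = vec.dim I + length vs"
    using dim_span_indep_mod[OF indep_mod_mono[OF ind set_vs assms(4)] assms(1)] .
  have "vec.span (?A \<union> U) = vec.span (U \<union> set vs)"
    unfolding vec.span_eq using assms(4) vec.span_superset[of "I \<union> set vs"]
      vec.span_mono[of "I \<union> set vs" "U \<union> set vs"]
    by (auto intro: vec.span_base)
  then have "vec.dim ?A + vec.dim U = vec.dim (?A \<inter> U) + vec.dim U + length vs"
    using dim_span_Un_add_dim_Int[OF vec.subspace_span assms(2), of "I \<union> set vs"]
      dim_span_indep_mod[OF ind assms(2)] by simp
  then have "vec.dim (?A \<inter> U) = vec.dim I" using dim_A by simp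
  moreover have "I \<subseteq> ?A \<inter> U" using assms(4) vec.span_superset by blast
  ultimately have "?A \<inter> U = I"
    using vec.subspace_dim_equal[of I "?A \<inter> U"] assms(1,2) vec.subspace_inter by auto
  moreover have "?A \<subseteq> V" using set_vs assms vec.span_minimal[of "I \<union> set vs" V] by blast
  ultimately show ?thesis using dim_A unfolding subspaces_meeting_def by auto
qed

lemma indep_mod_fibre:
  fixes I U V :: "('a::field ^ 'n::finite) set"
  assumes "vec.subspace I" "vec.subspace U" "I \<subseteq> U"
    and A: "A \<in> subspaces_meeting V U I (vec.dim I + t)"
  shows "{vs. length vs = t \<and> indep_mod V U vs \<and> vec.span (I \<union> set vs) = A}
       = {vs. length vs = t \<and> indep_mod A I vs}"
proof (rule set_eqI, rule iffI)
  fix vs assume "vs \<in> {vs. length vs = t \<and> indep_mod V U vs \<and> vec.span (I \<union> set vs) = A}"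
  then have ind: "indep_mod V U vs" "length vs = t" "vec.span (I \<union> set vs) = A" by auto
  then have "set vs \<subseteq> A" using vec.span_superset[of "I \<union> set vs"] by blast
  then show "vs \<in> {vs. length vs = t \<and> indep_mod A I vs}"
    using indep_mod_mono[OF ind(1) _ assms(3)] ind(2) by blast
next
  fix vs assume "vs \<in> {vs. length vs = t \<and> indep_mod A I vs}"
  then have ind: "indep_mod A I vs" "length vs = t" by auto
  have A': "vec.subspace A" "vec.dim A = vec.dim I + t" "A \<subseteq> V" "A \<inter> U = I"
    using A unfolding subspaces_meeting_def by auto
  have "vec.span (I \<union> set vs) \<subseteq> A"
    using indep_mod_set[OF ind(1)] A' vec.span_minimal[of "I \<union> set vs" A] by blast
  moreover have "vec.dim (vec.span (I \<union> set vs)) = vec.dim I + t"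
    using dim_span_indep_mod[OF ind(1) assms(1)] ind(2) by simp
  ultimately have "vec.span (I \<union> set vs) = A"
    using vec.subspace_dim_equal[OF vec.subspace_span A'(1)] A'(2) by simp
  then show "vs \<in> {vs. length vs = t \<and> indep_mod V U vs \<and> vec.span (I \<union> set vs) = A}"
    using indep_mod_lift[OF ind(1) A'(3,4,1) assms(2)] ind(2) by simp
qed

text \<open>Each subspace meeting \<open>U\<close> in \<open>I\<close> is spanned by \<open>I\<close> and a list independent modulo \<open>U\<close>,
  in as many ways as it has lists independent modulo \<open>I\<close>.\<close>

lemma card_indep_mod_eq_mult:
  fixes I U V :: "('a::{finite,field} ^ 'n::finite) set"
  assumes "vec.subspace I" "vec.subspace U" "vec.subspace V" "I \<subseteq> U" "U \<subseteq> V"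
  shows "card {vs. length vs = t \<and> indep_mod V U vs}
       = card (subspaces_meeting V U I (vec.dim I + t))
         * (\<Prod>j<t. CARD('a) ^ (vec.dim I + t) - CARD('a) ^ (vec.dim I + j))"
proof -
  let ?Seq = "{vs. length vs = t \<and> indep_mod V U vs}"
  let ?T = "subspaces_meeting V U I (vec.dim I + t)"
  let ?fibre = "\<lambda>A. {vs. length vs = t \<and> indep_mod V U vs \<and> vec.span (I \<union> set vs) = A}"
  have "?Seq = (\<Union>A\<in>?T. ?fibre A)"
    using span_indep_mod_in_meeting[OF assms] by blast
  then have "card ?Seq = (\<Sum>A\<in>?T. card (?fibre A))"
    by (simp only:) (rule card_UN_disjoint; auto simp: finite_lists_of_length)
  also have "\<dots> = (\<Sum>A\<in>?T. \<Prod>j<t. CARD('a) ^ (vec.dim I + t) - CARD('a) ^ (vec.dim I + j))"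
  proof (rule sum.cong[OF refl])
    fix A assume A: "A \<in> ?T"
    then have "vec.subspace A" "vec.dim A = vec.dim I + t" "I \<subseteq> A"
      unfolding subspaces_meeting_def by auto
    then show "card (?fibre A) = (\<Prod>j<t. CARD('a) ^ (vec.dim I + t) - CARD('a) ^ (vec.dim I + j))"
      using card_indep_mod[of A I t] assms indep_mod_fibre[OF assms(1,2,4) A] by simp
  qed
  finally show ?thesis by simp
qed

lemma of_nat_prod_diff:
  assumes "\<And>j. j < t \<Longrightarrow> b j \<le> (a::nat)"
  shows "real (\<Prod>j<t. a - b j) = (\<Prod>j<t. real a - real (b j))"
  unfolding of_nat_prod using assms by (intro prod.cong) (auto simp: of_nat_diff)

lemma card_subspaces_meeting:
  fixes I U V :: "('a::{finite,field} ^ 'n::finite) set"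
  assumes "vec.subspace I" "vec.subspace U" "vec.subspace V" "I \<subseteq> U" "U \<subseteq> V"
    and "vec.dim U + t \<le> vec.dim V"
  shows "real (card (subspaces_meeting V U I (vec.dim I + t)))
       = qframes CARD('a) (vec.dim V) (vec.dim U) t / qframes CARD('a) (vec.dim I + t) (vec.dim I) t"
proof -
  have q: "2 \<le> CARD('a)" by (rule two_le_card_field)
  have "real (card {vs. length vs = t \<and> indep_mod V U vs}) = qframes CARD('a) (vec.dim V) (vec.dim U) t"
    unfolding card_indep_mod[OF assms(3,2,5)] qframes_def
    using q assms(6) by (subst of_nat_prod_diff) (auto intro: power_increasing)
  moreover have "real (\<Prod>j<t. CARD('a) ^ (vec.dim I + t) - CARD('a) ^ (vec.dim I + j))
      = qframes CARD('a) (vec.dim I + t) (vec.dim I) t"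
    unfolding qframes_def using q by (subst of_nat_prod_diff) (auto intro: power_increasing)
  moreover have "0 < qframes CARD('a) (vec.dim I + t) (vec.dim I) t"
    using q by (simp add: qframes_pos)
  ultimately show ?thesis
    unfolding card_indep_mod_eq_mult[OF assms(1-5)] by (simp add: field_simps)
qed

lemma card_subspaces_in:
  fixes S :: "('a::{finite,field} ^ 'n::finite) set"
  assumes "vec.subspace S" "l \<le> vec.dim S"
  shows "real (card (subspaces_in S l)) = gauss_coef CARD('a) (int (vec.dim S)) (int l)"
proof -
  have "subspaces_in S l = subspaces_meeting S {0} {0} (vec.dim {0} + l)"
    unfolding subspaces_in_def subspaces_meeting_def using vec.subspace_0 by auto
  then show ?thesis
    using card_subspaces_meeting[of "{0}" "{0}" S l] assms vec.subspace_0[OF assms(1)]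
      gauss_coef_eq_qframes[OF two_le_card_field[where 'a='a] assms(2)]
    by simp
qed

lemma card_subspaces_meeting_ge:
  fixes I U V :: "('a::{finite,field} ^ 'n::finite) set"
  assumes "vec.subspace I" "vec.subspace U" "vec.subspace V" "I \<subseteq> U" "U \<subseteq> V"
    and "vec.dim U \<le> u" "u + t \<le> vec.dim V"
  shows "real CARD('a) ^ (t * (u - vec.dim I)) * gauss_coef CARD('a) (int (vec.dim V - u)) (int t)
       \<le> real (card (subspaces_meeting V U I (vec.dim I + t)))"
proof -
  have q: "2 \<le> CARD('a)" by (rule two_le_card_field)
  have "vec.dim I \<le> vec.dim U" using assms(4) by (rule vec.dim_subset)
  then have "real CARD('a) ^ (t * (u - vec.dim I)) * gauss_coef CARD('a) (int (vec.dim V - u)) (int t)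
      = qframes CARD('a) (vec.dim V) u t / qframes CARD('a) (vec.dim I + t) (vec.dim I) t"
    using assms qframes_ratio_eq[OF q, of "vec.dim I" u t "vec.dim V"] by simp
  also have "\<dots> \<le> qframes CARD('a) (vec.dim V) (vec.dim U) t / qframes CARD('a) (vec.dim I + t) (vec.dim I) t"
    using assms q qframes_pos[OF q, of "vec.dim I" t "vec.dim I + t"]
    by (intro divide_right_mono qframes_antimono) auto
  also have "\<dots> = real (card (subspaces_meeting V U I (vec.dim I + t)))"
    using assms by (simp add: card_subspaces_meeting)
  finally show ?thesis .
qed

section \<open>Subspaces avoiding hyperplanes\<close>

definition hyperplane_avoid_bound :: "nat \<Rightarrow> nat \<Rightarrow> nat \<Rightarrow> nat \<Rightarrow> real" where
  "hyperplane_avoid_bound q k j s =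
     real q ^ (k - j) * gauss_coef q (int k - 1) (int j - 1)
     - (real s - 1) * real q ^ (k - j - 1) * gauss_coef q (int k - 2) (int j - 1)"

lemma hyperplane_avoid_bound_eq:
  assumes q: "2 \<le> q" and "1 \<le> j" "j + 2 \<le> k"
  shows "hyperplane_avoid_bound q k j s
       = gauss_coef q (int k) (int j) - gauss_coef q (int (k - 1)) (int j)
         - (real s - 1) * (gauss_coef q (int (k - 1)) (int j) - gauss_coef q (int (k - 2)) (int j))"
proof -
  have "gauss_coef q (int (Suc (k - 1))) (int (Suc (j - 1))) - gauss_coef q (int (k - 1)) (int (Suc (j - 1)))
      = real q ^ (k - 1 - (j - 1)) * gauss_coef q (int (k - 1)) (int (j - 1))"
    using assms by (intro gauss_coef_pascal[OF q]) simp
  moreover have "gauss_coef q (int (Suc (k - 2))) (int (Suc (j - 1))) - gauss_coef q (int (k - 2)) (int (Suc (j - 1)))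
      = real q ^ (k - 2 - (j - 1)) * gauss_coef q (int (k - 2)) (int (j - 1))"
    using assms by (intro gauss_coef_pascal[OF q]) simp
  moreover have "Suc (k - 1) = k" "Suc (k - 2) = k - 1" "Suc (j - 1) = j"
    "k - 1 - (j - 1) = k - j" "k - 2 - (j - 1) = k - j - 1" using assms by auto
  ultimately show ?thesis
    using assms unfolding hyperplane_avoid_bound_def by (simp add: of_nat_diff algebra_simps)
qed

lemma card_subspaces_in_Diff_le:
  fixes C H H' :: "('a::{finite,field} ^ 'n::finite) set"
  assumes C: "vec.subspace C" "vec.dim C = k"
    and H: "vec.subspace H" "H \<subseteq> C" "vec.dim H = k - 1"
    and H': "vec.subspace H'" "H' \<subseteq> C" "vec.dim H' = k - 1"
    and j: "j + 2 \<le> k"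
  shows "real (card (subspaces_in H j - subspaces_in H' j))
       \<le> gauss_coef CARD('a) (int (k - 1)) (int j) - gauss_coef CARD('a) (int (k - 2)) (int j)"
proof -
  have sHH': "vec.subspace (H \<inter> H')" using H H' vec.subspace_inter by blast
  have "vec.span (H \<union> H') \<subseteq> C" using H H' C vec.span_minimal[of "H \<union> H'" C] by blast
  then have "vec.dim (vec.span (H \<union> H')) \<le> k" using C by (metis vec.dim_subset vec.dim_span)
  then have "k - 2 \<le> vec.dim (H \<inter> H')"
    using dim_span_Un_add_dim_Int[OF H(1) H'(1)] H H' by linarith
  moreover have "vec.dim ({} :: ('a ^ 'n) set) \<le> k - 2" by simp
  ultimately obtain W where W: "vec.subspace W" "W \<subseteq> H \<inter> H'" "vec.dim W = k - 2"
    using subspace_between_exists[OF sHH' empty_subsetI] by blast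
  have sub: "subspaces_in W j \<subseteq> subspaces_in H j"
    using W unfolding subspaces_in_def by auto
  have "card (subspaces_in H j - subspaces_in H' j) \<le> card (subspaces_in H j - subspaces_in W j)"
    using W unfolding subspaces_in_def by (intro card_mono) auto
  also have "\<dots> = card (subspaces_in H j) - card (subspaces_in W j)"
    by (rule card_Diff_subset[OF finite sub])
  finally have "real (card (subspaces_in H j - subspaces_in H' j))
      \<le> real (card (subspaces_in H j)) - real (card (subspaces_in W j))"
    using card_mono[OF finite sub] by (simp add: of_nat_diff)
  also have "\<dots> = gauss_coef CARD('a) (int (k - 1)) (int j) - gauss_coef CARD('a) (int (k - 2)) (int j)"
    using card_subspaces_in[OF H(1), of j] card_subspaces_in[OF W(1), of j] H(3) W(3) j
    by simp
  finally show ?thesis .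
qed

lemma card_subspaces_avoiding_hyperplanes_ge:
  fixes C :: "('a::{finite,field} ^ 'n::finite) set" and H :: "'b \<Rightarrow> ('a ^ 'n) set"
  assumes C: "vec.subspace C" "vec.dim C = k" and "finite F" "card F = s" "1 \<le> s"
    and H: "\<And>B. B \<in> F \<Longrightarrow> vec.subspace (H B) \<and> H B \<subseteq> C \<and> vec.dim (H B) = k - 1"
    and "1 \<le> j" "j + 2 \<le> k"
  shows "hyperplane_avoid_bound CARD('a) k j s \<le> real (card {I \<in> subspaces_in C j. \<forall>B\<in>F. \<not> I \<subseteq> H B})"
proof -
  let ?S = "\<lambda>X. subspaces_in X j"
  let ?g = "\<lambda>m. gauss_coef CARD('a) (int m) (int j)"
  obtain B0 where B0: "B0 \<in> F" using assms(4,5) by fastforce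
  have H0: "vec.subspace (H B0)" "H B0 \<subseteq> C" "vec.dim (H B0) = k - 1" using H[OF B0] by auto
  let ?Bad = "\<Union>B\<in>F. ?S (H B)"
  have bad: "?Bad \<subseteq> ?S (H B0) \<union> (\<Union>B\<in>F - {B0}. (?S (H B) - ?S (H B0)))" by blast
  have "card ?Bad \<le> card (?S (H B0) \<union> (\<Union>B\<in>F - {B0}. (?S (H B) - ?S (H B0))))"
    by (rule card_mono[OF finite bad])
  also have "\<dots> \<le> card (?S (H B0)) + card (\<Union>B\<in>F - {B0}. (?S (H B) - ?S (H B0)))"
    by (rule card_Un_le)
  also have "\<dots> \<le> card (?S (H B0)) + (\<Sum>B\<in>F - {B0}. card (?S (H B) - ?S (H B0)))"
    by (rule add_left_mono, rule card_UN_le) (simp add: assms(3))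
  finally have "card ?Bad \<le> card (?S (H B0)) + (\<Sum>B\<in>F - {B0}. card (?S (H B) - ?S (H B0)))" .
  then have "real (card ?Bad) \<le> real (card (?S (H B0))) + (\<Sum>B\<in>F - {B0}. real (card (?S (H B) - ?S (H B0))))"
    by (metis of_nat_add of_nat_le_iff of_nat_sum)
  also have "\<dots> \<le> ?g (k - 1) + (\<Sum>B\<in>F - {B0}. ?g (k - 1) - ?g (k - 2))"
    using H0 H assms card_subspaces_in[OF H0(1)]
    by (intro add_mono sum_mono card_subspaces_in_Diff_le[OF C]) auto
  also have "\<dots> = ?g (k - 1) + (real s - 1) * (?g (k - 1) - ?g (k - 2))"
    using assms B0 by (simp add: card_Diff_subset of_nat_diff)
  finally have bad_le: "real (card ?Bad) \<le> ?g (k - 1) + (real s - 1) * (?g (k - 1) - ?g (k - 2))" .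
  have "{I \<in> ?S C. \<forall>B\<in>F. \<not> I \<subseteq> H B} = ?S C - ?Bad" unfolding subspaces_in_def by auto
  moreover have "?Bad \<subseteq> ?S C" using H unfolding subspaces_in_def by blast
  ultimately have "real (card {I \<in> ?S C. \<forall>B\<in>F. \<not> I \<subseteq> H B}) = real (card (?S C)) - real (card ?Bad)"
    by (simp add: card_Diff_subset card_mono of_nat_diff)
  moreover have "real (card (?S C)) = ?g k" using card_subspaces_in[OF C(1), of j] C(2) assms(8) by simp
  moreover have "hyperplane_avoid_bound CARD('a) k j s = ?g k - ?g (k - 1) - (real s - 1) * (?g (k - 1) - ?g (k - 2))"
    using assms(7,8) by (rule hyperplane_avoid_bound_eq[OF two_le_card_field])
  ultimately show ?thesis using bad_le by linarith
qed

lemma card_subspaces_avoiding_ge: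
  fixes C :: "('a::{finite,field} ^ 'n::finite) set"
  assumes C: "vec.subspace C" "vec.dim C = k" and "finite F" "card F = s" "1 \<le> s"
    and F: "\<And>B. B \<in> F \<Longrightarrow> vec.subspace B \<and> \<not> C \<subseteq> B"
    and "1 \<le> j" "j + 2 \<le> k"
  shows "hyperplane_avoid_bound CARD('a) k j s \<le> real (card {I \<in> subspaces_in C j. \<forall>B\<in>F. \<not> I \<subseteq> B})"
proof -
  have "\<forall>B\<in>F. \<exists>H. vec.subspace H \<and> C \<inter> B \<subseteq> H \<and> H \<subseteq> C \<and> vec.dim H = k - 1"
    using hyperplane_through_Int_exists[of _ C] F C by metis
  then obtain H where H: "\<And>B. B \<in> F \<Longrightarrow> vec.subspace (H B) \<and> C \<inter> B \<subseteq> H B \<and> H B \<subseteq> C \<and> vec.dim (H B) = k - 1"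
    by metis
  have "{I \<in> subspaces_in C j. \<forall>B\<in>F. \<not> I \<subseteq> H B} \<subseteq> {I \<in> subspaces_in C j. \<forall>B\<in>F. \<not> I \<subseteq> B}"
    using H unfolding subspaces_in_def by blast
  then have "card {I \<in> subspaces_in C j. \<forall>B\<in>F. \<not> I \<subseteq> H B} \<le> card {I \<in> subspaces_in C j. \<forall>B\<in>F. \<not> I \<subseteq> B}"
    by (simp add: card_mono)
  then show ?thesis
    using card_subspaces_avoiding_hyperplanes_ge[OF C assms(3-5), of H j] H assms(7,8) by force
qed

lemma hyperplane_avoid_bound_pos:
  assumes q: "2 \<le> q" and "1 \<le> j" "j < k"
    and s: "real s \<le> real q * (real q ^ (k - 1) - 1) / (real q ^ (k - j) - 1)"
  shows "0 < hyperplane_avoid_bound q k j s"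
proof -
  define G1 where "G1 = gauss_coef q (int k - 1) (int j - 1)"
  define G2 where "G2 = gauss_coef q (int k - 2) (int j - 1)"
  have "gauss_coef q (int (Suc (k - 2))) (int (j - 1)) * (real q ^ (Suc (k - 2) - (j - 1)) - 1)
      = gauss_coef q (int (k - 2)) (int (j - 1)) * (real q ^ Suc (k - 2) - 1)"
    using assms by (intro gauss_coef_Suc_ratio[OF q]) simp
  moreover have "Suc (k - 2) = k - 1" "Suc (k - 2) - (j - 1) = k - j" using assms by auto
  ultimately have ratio: "G1 * (real q ^ (k - j) - 1) = G2 * (real q ^ (k - 1) - 1)"
    using assms unfolding G1_def G2_def by (simp add: of_nat_diff)
  have G2: "0 < G2" unfolding G2_def using gauss_coef_pos[OF q, of "j - 1" "k - 2"] assms by (simp add: of_nat_diff)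
  have D: "0 < real q ^ (k - j) - 1" using power_minus_one_pos[OF q] assms by simp
  have "real s - 1 < real q * (real q ^ (k - 1) - 1) / (real q ^ (k - j) - 1)" using s by simp
  also have "\<dots> = real q * G1 / G2"
  proof -
    have "(real q ^ (k - 1) - 1) / (real q ^ (k - j) - 1) = G1 / G2"
      using ratio D G2 by (simp add: frac_eq_eq mult.commute)
    then show ?thesis by (metis times_divide_eq_right)
  qed
  finally have "(real s - 1) * G2 * real q ^ (k - j - 1) < real q * G1 * real q ^ (k - j - 1)"
    using G2 q by (intro mult_strict_right_mono) (simp_all add: field_simps)
  moreover have "real q * real q ^ (k - j - 1) = real q ^ (k - j)"
    using assms by (simp flip: power_Suc)
  ultimately show ?thesis
    unfolding hyperplane_avoid_bound_def G1_def[symmetric] G2_def[symmetric] by (simp add: algebra_simps)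
qed

lemma hyperplane_avoid_bound_pos_of_le:
  assumes q: "2 \<le> q" and "1 \<le> i" "i \<le> j" "j < k"
    and s: "real s \<le> real q * (real q ^ (k - 1) - 1) / (real q ^ (k - i) - 1)"
  shows "0 < hyperplane_avoid_bound q k j s"
proof (rule hyperplane_avoid_bound_pos[OF q])
  have "real q * (real q ^ (k - 1) - 1) / (real q ^ (k - i) - 1)
      \<le> real q * (real q ^ (k - 1) - 1) / (real q ^ (k - j) - 1)"
  proof (rule divide_left_mono)
    show "real q ^ (k - j) - 1 \<le> real q ^ (k - i) - 1" using q assms by (simp add: power_increasing)
    show "0 \<le> real q * (real q ^ (k - 1) - 1)" using q by simp
    show "0 < (real q ^ (k - i) - 1) * (real q ^ (k - j) - 1)"
      using power_minus_one_pos[OF q] assms by simp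
  qed
  then show "real s \<le> real q * (real q ^ (k - 1) - 1) / (real q ^ (k - j) - 1)"
    using s by linarith
qed (use assms in auto)

section \<open>The disjunctness bound\<close>

text \<open>With \<open>T = A \<inter> B\<close> and \<open>r = dim (A \<inter> U \<inter> B) < i\<close>, the modular law gives
  \<open>(T + C) \<inter> Z = C\<close>, hence \<open>dim (T + C + Z) = i - r + dim Z \<le> dim (C + B)\<close>. If \<open>Z = C + B\<close>
  this contradicts \<open>r < i\<close>; otherwise \<open>dim Z = 2k + d - 2i\<close> and \<open>dim (C + B) \<le> 2k - r\<close>
  force \<open>d \<le> i\<close>, which with \<open>2i \<le> d + r\<close> (from \<open>T + I \<subseteq> A\<close>) again gives \<open>i \<le> r\<close>.\<close>

lemma dim_Int_ne_of_meeting: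
  fixes A B C U Z :: "('a::field ^ 'n::finite) set"
  assumes subsp: "vec.subspace A" "vec.subspace B" "vec.subspace C" "vec.subspace U" "vec.subspace Z"
    and dims: "vec.dim A = d" "vec.dim B = k" "vec.dim C = k" "vec.dim (A \<inter> U) = i"
    and incl: "A \<inter> U \<subseteq> C" "C \<subseteq> Z" "Z \<subseteq> U" "Z \<subseteq> vec.span (C \<union> B)"
    and dim_Z: "vec.dim Z = min (vec.dim (vec.span (C \<union> B))) (2 * k + d - 2 * i)"
    and not_in_B: "\<not> A \<inter> U \<subseteq> B" and "i \<le> d" "d < k"
  shows "vec.dim (A \<inter> B) \<noteq> i"
proof
  assume dim_T: "vec.dim (A \<inter> B) = i"
  define I where "I = A \<inter> U"
  define T where "T = A \<inter> B"
  define r where "r = vec.dim (I \<inter> B)"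
  have sI: "vec.subspace I" and sT: "vec.subspace T"
    unfolding I_def T_def using subsp vec.subspace_inter by blast+
  have r_lt: "r < i" using dim_Int_less[OF sI subsp(2)] not_in_B dims(4) unfolding r_def I_def by simp
  have "vec.dim (vec.span (T \<union> I)) \<le> d"
    using vec.span_minimal[of "T \<union> I" A] subsp(1) dims(1) vec.dim_subset[of _ A]
    unfolding I_def T_def by (metis Int_lower1 le_supI vec.dim_span)
  moreover have "T \<inter> I = I \<inter> B" unfolding T_def I_def by blast
  ultimately have r_ge: "i + i \<le> d + r"
    using dim_span_Un_add_dim_Int[OF sT sI] dim_T dims(4) unfolding r_def T_def I_def by simp
  have "T \<inter> C = I \<inter> B" using incl unfolding T_def I_def by blast
  then have dim_TC: "vec.dim (vec.span (T \<union> C)) + r = i + k"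
    using dim_span_Un_add_dim_Int[OF sT subsp(3)] dim_T dims(3) unfolding r_def T_def by simp
  have "vec.span (T \<union> C) \<inter> Z = C"
    using incl by (intro span_Un_Int_eq[OF sT subsp(3,5)]) (auto simp: T_def)
  then have dim_TCZ: "vec.dim (vec.span (vec.span (T \<union> C) \<union> Z)) + k = vec.dim (vec.span (T \<union> C)) + vec.dim Z"
    using dim_span_Un_add_dim_Int[OF vec.subspace_span subsp(5), of "T \<union> C"] dims(3) by simp
  have "vec.span (T \<union> C) \<subseteq> vec.span (C \<union> B)"
    unfolding T_def by (intro vec.span_mono) blast
  then have "vec.span (vec.span (T \<union> C) \<union> Z) \<subseteq> vec.span (C \<union> B)"
    using incl(4) by (intro vec.span_minimal) auto
  then have dim_CB: "vec.dim (vec.span (vec.span (T \<union> C) \<union> Z)) \<le> vec.dim (vec.span (C \<union> B))"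
    by (metis vec.dim_span vec.dim_subset)
  have "vec.dim (vec.span (C \<union> B)) + vec.dim (C \<inter> B) = k + k"
    using dim_span_Un_add_dim_Int[OF subsp(3,2)] dims by simp
  moreover have "r \<le> vec.dim (C \<inter> B)" unfolding r_def using incl I_def by (intro vec.dim_subset) blast
  moreover have "2 * k + d - 2 * i + 2 * i = 2 * k + d" using \<open>i \<le> d\<close> \<open>d < k\<close> by simp
  ultimately show False
    using dim_Z r_lt r_ge dim_TC dim_TCZ dim_CB by (auto simp: min_def split: if_splits)
qed

lemma separating_space_exists:
  fixes C :: "('a::field ^ 'n::finite) set"
  assumes C: "vec.subspace C" "vec.dim C = k" and "finite F"
    and F: "\<And>B. B \<in> F \<Longrightarrow> vec.subspace B \<and> vec.dim B = k"
    and "i \<le> d" "d < k"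
  obtains U where "vec.subspace U" "C \<subseteq> U" "vec.dim U \<le> k + card F * (k + d - 2 * i)"
    and "\<And>A B. B \<in> F \<Longrightarrow> vec.subspace A \<Longrightarrow> vec.dim A = d \<Longrightarrow> vec.dim (A \<inter> U) = i
           \<Longrightarrow> A \<inter> U \<subseteq> C \<Longrightarrow> \<not> A \<inter> U \<subseteq> B \<Longrightarrow> vec.dim (A \<inter> B) \<noteq> i"
proof -
  let ?m = "\<lambda>B. min (vec.dim (vec.span (C \<union> B))) (2 * k + d - 2 * i)"
  have "\<forall>B\<in>F. \<exists>Z. vec.subspace Z \<and> C \<subseteq> Z \<and> Z \<subseteq> vec.span (C \<union> B) \<and> vec.dim Z = ?m B"
  proof
    fix B assume "B \<in> F"
    have CB: "C \<subseteq> vec.span (C \<union> B)" using vec.span_superset by blast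
    then have "vec.dim C \<le> ?m B" using C \<open>i \<le> d\<close> \<open>d < k\<close> vec.dim_subset[OF CB] by simp
    then show "\<exists>Z. vec.subspace Z \<and> C \<subseteq> Z \<and> Z \<subseteq> vec.span (C \<union> B) \<and> vec.dim Z = ?m B"
      using subspace_between_exists[OF vec.subspace_span CB] by (metis min.cobounded1)
  qed
  then obtain Z where Z: "\<And>B. B \<in> F \<Longrightarrow> vec.subspace (Z B) \<and> C \<subseteq> Z B \<and> Z B \<subseteq> vec.span (C \<union> B) \<and> vec.dim (Z B) = ?m B"
    by metis
  define U where "U = vec.span (C \<union> \<Union>(Z ` F))"
  have sU: "vec.subspace U" unfolding U_def by (rule vec.subspace_span)
  have ZU: "Z B \<subseteq> U" if "B \<in> F" for B
  proof -
    have "Z B \<subseteq> C \<union> \<Union>(Z ` F)" using that by blast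
    then show ?thesis unfolding U_def using vec.span_superset by (rule order_trans)
  qed
  have "vec.dim U \<le> vec.dim C + card F * (k + d - 2 * i)"
    unfolding U_def
  proof (rule dim_span_UN_le[OF assms(3) C(1)])
    fix B assume "B \<in> F"
    then show "vec.subspace (Z B) \<and> C \<subseteq> Z B \<and> vec.dim (Z B) \<le> vec.dim C + (k + d - 2 * i)"
      using Z[of B] C assms(5,6) by auto
  qed
  then have "vec.dim U \<le> k + card F * (k + d - 2 * i)" using C(2) by simp
  moreover have "vec.dim (A \<inter> B) \<noteq> i"
    if B: "B \<in> F" and A: "vec.subspace A" "vec.dim A = d" "vec.dim (A \<inter> U) = i"
      "A \<inter> U \<subseteq> C" "\<not> A \<inter> U \<subseteq> B" for A B
  proof -
    have ZB: "vec.subspace (Z B)" "C \<subseteq> Z B" "Z B \<subseteq> vec.span (C \<union> B)" "vec.dim (Z B) = ?m B"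
      using Z[OF B] by auto
    have FB: "vec.subspace B" "vec.dim B = k" using F[OF B] by auto
    show ?thesis
      by (rule dim_Int_ne_of_meeting[OF A(1) FB(1) C(1) sU ZB(1) A(2) FB(2) C(2) A(3,4) ZB(2)
            ZU[OF B] ZB(3,4) A(5) assms(5,6)])
  qed
  moreover have "C \<subseteq> U" unfolding U_def using vec.span_superset[of "C \<union> \<Union>(Z ` F)"] by blast
  ultimately show ?thesis using that sU by blast
qed

lemma e2bar_eq:
  assumes "i \<le> d" "d < k" "k + s * (k + d - 2 * i) \<le> m"
  shows "e2bar q i d k m s + 1
       = real q ^ ((d - i) * (k + s * (k + d - 2 * i) - i))
         * gauss_coef q (int (m - (k + s * (k + d - 2 * i)))) (int (d - i))
         * hyperplane_avoid_bound q k i s"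
proof -
  have "int m - int k - int s * (int k + int d - 2 * int i) = int (m - (k + s * (k + d - 2 * i)))"
    using assms by (simp add: of_nat_diff)
  moreover have "int d - int i = int (d - i)" using assms by simp
  ultimately show ?thesis unfolding e2bar_def hyperplane_avoid_bound_def by (simp only:)
qed

lemma e1bar_eq: "e1bar q d k s = hyperplane_avoid_bound q k d s - 1"
  by (simp add: e1bar_def hyperplane_avoid_bound_def)

lemma card_rows_ge:
  fixes C U :: "('a::{finite,field} ^ 'n::finite) set"
  assumes U: "vec.subspace U" "C \<subseteq> U" "vec.dim U \<le> u" "u + (d - i) \<le> CARD('n)" and "i \<le> d"
    and sep: "\<And>A B. B \<in> F \<Longrightarrow> vec.subspace A \<Longrightarrow> vec.dim A = d \<Longrightarrow> vec.dim (A \<inter> U) = i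
           \<Longrightarrow> A \<inter> U \<subseteq> C \<Longrightarrow> \<not> A \<inter> U \<subseteq> B \<Longrightarrow> vec.dim (A \<inter> B) \<noteq> i"
  shows "real CARD('a) ^ ((d - i) * (u - i)) * gauss_coef CARD('a) (int (CARD('n) - u)) (int (d - i))
           * real (card {I \<in> subspaces_in C i. \<forall>B\<in>F. \<not> I \<subseteq> B})
         \<le> real (card {A \<in> subspaces_of_dim d. Mentry i A C \<and> (\<forall>B\<in>F. \<not> Mentry i A B)})"
proof -
  define Q where "Q = real CARD('a) ^ ((d - i) * (u - i)) * gauss_coef CARD('a) (int (CARD('n) - u)) (int (d - i))"
  define good where "good = {I \<in> subspaces_in C i. \<forall>B\<in>F. \<not> I \<subseteq> B}"
  define rows where "rows = {A \<in> subspaces_of_dim d. Mentry i A C \<and> (\<forall>B\<in>F. \<not> Mentry i A B)}"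
  have incl: "(\<Union>I\<in>good. subspaces_meeting UNIV U I d) \<subseteq> rows"
  proof clarify
    fix I A assume "I \<in> good" "A \<in> subspaces_meeting UNIV U I d"
    then have A: "vec.subspace A" "vec.dim A = d" "A \<inter> U = I"
      and I: "vec.dim I = i" "I \<subseteq> C" "\<forall>B\<in>F. \<not> I \<subseteq> B"
      unfolding good_def subspaces_in_def subspaces_meeting_def by auto
    have "A \<inter> C = I" using A(3) I(2) U(2) by blast
    moreover have "vec.dim (A \<inter> B) \<noteq> i" if "B \<in> F" for B
      using sep[OF that A(1,2)] A(3) I that by simp
    ultimately show "A \<in> rows" using A I unfolding rows_def subspaces_of_dim_def Mentry_def by simp
  qed
  have "disjoint_family_on (\<lambda>I. subspaces_meeting UNIV U I d) good"
    unfolding disjoint_family_on_def subspaces_meeting_def by blast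
  then have "(\<Sum>I\<in>good. card (subspaces_meeting UNIV U I d)) = card (\<Union>I\<in>good. subspaces_meeting UNIV U I d)"
    by (simp add: card_UN_disjoint')
  also have "\<dots> \<le> card rows" by (rule card_mono[OF finite incl])
  finally have rows_ge: "(\<Sum>I\<in>good. real (card (subspaces_meeting UNIV U I d))) \<le> real (card rows)"
    by (metis of_nat_le_iff of_nat_sum)
  have "Q \<le> real (card (subspaces_meeting UNIV U I d))" if "I \<in> good" for I
  proof -
    have "vec.subspace I" "vec.dim I = i" "I \<subseteq> U"
      using that U(2) unfolding good_def subspaces_in_def by auto
    moreover have "vec.dim (UNIV :: ('a ^ 'n) set) = CARD('n)" by (simp add: vec.dim_UNIV card_cart_basis)
    ultimately show ?thesis
      using card_subspaces_meeting_ge[of I U UNIV u "d - i"] U \<open>i \<le> d\<close> unfolding Q_def by simp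
  qed
  then have "(\<Sum>I\<in>good. Q) \<le> (\<Sum>I\<in>good. real (card (subspaces_meeting UNIV U I d)))"
    by (rule sum_mono)
  then show ?thesis using rows_ge unfolding Q_def [symmetric] good_def [symmetric] rows_def [symmetric]
    by (simp add: mult.commute)
qed

lemma M_disjunct_e2bar:
  assumes q: "CARD('a::{finite,field}) = q" and n: "CARD('n::finite) = n"
    and "0 < i" "i \<le> d" "d < k" "i + 2 \<le> k"
    and n_big: "k + s * (k + d - 2 * i) + (d - i) \<le> n" and "1 \<le> s"
  shows "M_disjunct TYPE('a) TYPE('n) i d k s (e2bar q i d k n s)"
  unfolding M_disjunct_def
proof (intro ballI allI impI)
  fix C :: "('a ^ 'n) set" and F
  assume C: "C \<in> subspaces_of_dim k" and F: "F \<subseteq> subspaces_of_dim k \<and> C \<notin> F \<and> card F = s"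
  define u where "u = k + s * (k + d - 2 * i)"
  define Q where "Q = real q ^ ((d - i) * (u - i)) * gauss_coef q (int (n - u)) (int (d - i))"
  have sC: "vec.subspace C" "vec.dim C = k" using C unfolding subspaces_of_dim_def by auto
  have FB: "vec.subspace B \<and> vec.dim B = k" if "B \<in> F" for B
    using that F unfolding subspaces_of_dim_def by auto
  have C_notin: "vec.subspace B \<and> \<not> C \<subseteq> B" if "B \<in> F" for B
    using that F FB[OF that] sC vec.subspace_dim_equal[of C B] by auto
  obtain U where U: "vec.subspace U" "C \<subseteq> U" "vec.dim U \<le> k + card F * (k + d - 2 * i)"
    and sep: "\<And>A B. B \<in> F \<Longrightarrow> vec.subspace A \<Longrightarrow> vec.dim A = d \<Longrightarrow> vec.dim (A \<inter> U) = i
           \<Longrightarrow> A \<inter> U \<subseteq> C \<Longrightarrow> \<not> A \<inter> U \<subseteq> B \<Longrightarrow> vec.dim (A \<inter> B) \<noteq> i"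
    using separating_space_exists[OF sC finite FB assms(4,5)] by blast
  have dim_U: "vec.dim U \<le> u" and n_ge: "u + (d - i) \<le> CARD('n)"
    using U(3) F n_big n unfolding u_def by simp_all
  have "2 \<le> q" using two_le_card_field[where 'a='a] q by simp
  then have "0 < gauss_coef q (int (n - u)) (int (d - i))"
    by (rule gauss_coef_pos) (use n_big in \<open>simp add: u_def\<close>)
  then have "0 \<le> Q" unfolding Q_def by simp
  have "e2bar q i d k n s + 1 = Q * hyperplane_avoid_bound q k i s"
    unfolding Q_def u_def using assms(4,5) n_big by (intro e2bar_eq) simp_all
  also have "\<dots> \<le> Q * real (card {I \<in> subspaces_in C i. \<forall>B\<in>F. \<not> I \<subseteq> B})"
  proof (rule mult_left_mono[OF _ \<open>0 \<le> Q\<close>])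
    have "card F = s" using F by simp
    then show "hyperplane_avoid_bound q k i s \<le> real (card {I \<in> subspaces_in C i. \<forall>B\<in>F. \<not> I \<subseteq> B})"
      unfolding q[symmetric]
      by (rule card_subspaces_avoiding_ge[OF sC finite _ assms(8) C_notin]) (use assms(3,6) in simp_all)
  qed
  also have "\<dots> \<le> real (card {A \<in> subspaces_of_dim d. Mentry i A C \<and> (\<forall>B\<in>F. \<not> Mentry i A B)})"
    unfolding Q_def q[symmetric] n[symmetric]
    by (rule card_rows_ge[OF U(1,2) dim_U n_ge assms(4)]) (rule sep)
  finally show "e2bar q i d k n s + 1 \<le> real (card {A \<in> subspaces_of_dim d. Mentry i A C \<and> (\<forall>B\<in>F. \<not> Mentry i A B)})" .
qed

lemma e2bar_e1bar_ratio_tendsto: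
  assumes q: "2 \<le> q" and "0 < i" "i < d" "d < k"
    and s: "real s \<le> real q * (real q ^ (k - 1) - 1) / (real q ^ (k - i) - 1)"
  shows "filterlim (\<lambda>m. (e2bar q i d k m s + 1) / (e1bar q d k s + 1)) at_top at_top"
proof -
  define u where "u = k + s * (k + d - 2 * i)"
  define c where "c = real q ^ ((d - i) * (u - i)) * hyperplane_avoid_bound q k i s
                     / hyperplane_avoid_bound q k d s"
  have "0 < c"
    unfolding c_def using q assms hyperplane_avoid_bound_pos_of_le[OF q _ _ _ s] by simp
  have "\<forall>\<^sub>F m in at_top.
      c * gauss_coef q (int (m - u)) (int (d - i)) = (e2bar q i d k m s + 1) / (e1bar q d k s + 1)"
    unfolding eventually_at_top_linorder
  proof (intro exI allI impI)
    fix m assume "u \<le> m"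
    then have "e2bar q i d k m s + 1
        = real q ^ ((d - i) * (u - i)) * gauss_coef q (int (m - u)) (int (d - i)) * hyperplane_avoid_bound q k i s"
      using assms unfolding u_def by (intro e2bar_eq) simp_all
    then show "c * gauss_coef q (int (m - u)) (int (d - i)) = (e2bar q i d k m s + 1) / (e1bar q d k s + 1)"
      unfolding c_def e1bar_eq by simp
  qed
  moreover have "filterlim (\<lambda>m. c * gauss_coef q (int (m - u)) (int (d - i))) at_top at_top"
    using gauss_coef_tendsto_at_top[OF q, of "d - i" u] assms
    by (intro filterlim_tendsto_pos_mult_at_top[OF tendsto_const \<open>0 < c\<close>]) simp
  ultimately show ?thesis by (rule filterlim_cong[THEN iffD1, OF refl refl])
qed

theorem theorem1p4:
  fixes q i d k n s :: nat
  assumes field_card: "CARD('a::{finite,field}) = q"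
      and dim_n: "CARD('n::finite) = n"
      and q_pp: "\<exists>p m. prime p \<and> m > 0 \<and> q = p ^ m"
      and pos: "i > 0" "d > 0" "k > 0" "n > 0" "s > 0"
      and i_lo: "(d + 1) div 2 \<le> i" and "i \<le> d" and "d < k"
      and "k - i \<ge> 2"
      and n_big: "int n - int k - int s * (int k + int d - 2 * int i) \<ge> int d - int i"
      and s_bd: "1 \<le> s"
        "real s \<le> real q * (real q ^ (k - 1) - 1) / (real q ^ (k - i) - 1)"
  shows "M_disjunct TYPE('a) TYPE('n) i d k s (e2bar q i d k n s)
         \<and> (i < d \<longrightarrow>
              filterlim (\<lambda>m. (e2bar q i d k m s + 1) / (e1bar q d k s + 1)) at_top at_top)"
proof
  have "int (k + s * (k + d - 2 * i) + (d - i)) = int k + int s * (int k + int d - 2 * int i) + (int d - int i)"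
    using \<open>i \<le> d\<close> \<open>d < k\<close> by (simp add: of_nat_diff)
  then have "int (k + s * (k + d - 2 * i) + (d - i)) \<le> int n" using n_big by linarith
  then have "k + s * (k + d - 2 * i) + (d - i) \<le> n" by (simp only: of_nat_le_iff)
  then show "M_disjunct TYPE('a) TYPE('n) i d k s (e2bar q i d k n s)"
    using field_card dim_n pos(1) \<open>i \<le> d\<close> \<open>d < k\<close> \<open>k - i \<ge> 2\<close> s_bd(1)
    by (intro M_disjunct_e2bar) auto
  show "i < d \<longrightarrow> filterlim (\<lambda>m. (e2bar q i d k m s + 1) / (e1bar q d k s + 1)) at_top at_top"
    using e2bar_e1bar_ratio_tendsto[of q i d k s] two_le_card_field[where 'a='a] field_card pos(1) \<open>d < k\<close> s_bd(2)
    by blast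
qed

end
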